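(* Let $G$ be a finite simple graph with vertices $v_1,\dots,v_n$ ($n\ge 1$) in which no vertex is adjacent to all other vertices, let $d\ge 1$ be an integer, let $G'$ be the graph constructed from $(G,d)$ as described in the context, and let $h=n(n+1)+d$. Suppose $S_1,\dots,S_h$ are pairwise disjoint vertex sets of $G'$, each inducing a connected subgraph, such that for all $i\ne j$ some edge of $G'$ joins a vertex of $S_i$ to a vertex of $S_j$. Then each $S_i$ contains exactly one non-middle (i.e. top or bottom) vertex, and each non-middle vertex of $G'$ belongs to exactly one of the sets $S_i$.
   Context: Construction of $G'$ from a graph $G$ with vertices $v_1,\dots,v_n$ and an integer $d$: say $v_i$ dominates $v_j$ if $v_i=v_j$ or $v_iv_j$ is an edge of $G$. The vertex set of $G'$ consists of top vertices $t_1,\dots,t_d$, middle vertices $m_1,\dots,m_n$, and bottom vertices $b_{j,k}$ for $1\le j\le n$, $1\le k\le n+1$. Edges: the top vertices form a clique; the middle vertices form an independent set; the bottom vertices form a clique (of size $n(n+1)$); every top vertex is adjacent to every middle vertex; there are no top–bottom edges; middle vertex $m_i$ is adjacent to bottom vertex $b_{j,k}$ if and only if $v_i$ dominates $v_j$ in $G$. *)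

theory Defs
  imports Main
begin

text \<open>The graph G has vertices 0..n-1 (standing for v_1..v_n) and a symmetric,
irreflexive adjacency relation E. Vertices of G' (0-indexed):
Top i (i < d), Mid i (i < n), Bot j k (j < n, k < n+1).\<close>

datatype gvert = Top nat | Mid nat | Bot nat nat

definition simple_graph :: "nat \<Rightarrow> (nat \<Rightarrow> nat \<Rightarrow> bool) \<Rightarrow> bool" where
  "simple_graph n E \<longleftrightarrow> (\<forall>i j. E i j \<longrightarrow> i < n \<and> j < n) \<and>
     (\<forall>i j. E i j \<longrightarrow> E j i) \<and> (\<forall>i. \<not> E i i)"

definition dominates :: "(nat \<Rightarrow> nat \<Rightarrow> bool) \<Rightarrow> nat \<Rightarrow> nat \<Rightarrow> bool" where
  "dominates E i j \<longleftrightarrow> i = j \<or> E i j"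

definition Gp_verts :: "nat \<Rightarrow> nat \<Rightarrow> gvert set" where
  "Gp_verts n d = Top ` {..<d} \<union> Mid ` {..<n} \<union> {Bot j k | j k. j < n \<and> k < n + 1}"

fun Gp_adj0 :: "(nat \<Rightarrow> nat \<Rightarrow> bool) \<Rightarrow> gvert \<Rightarrow> gvert \<Rightarrow> bool" where
  "Gp_adj0 E (Top a) (Top b) = (a \<noteq> b)"
| "Gp_adj0 E (Mid a) (Mid b) = False"
| "Gp_adj0 E (Bot a b) (Bot c e) = ((a, b) \<noteq> (c, e))"
| "Gp_adj0 E (Top a) (Mid b) = True"
| "Gp_adj0 E (Mid b) (Top a) = True"
| "Gp_adj0 E (Top a) (Bot b c) = False"
| "Gp_adj0 E (Bot b c) (Top a) = False"
| "Gp_adj0 E (Mid i) (Bot j k) = dominates E i j"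
| "Gp_adj0 E (Bot j k) (Mid i) = dominates E i j"

definition Gp_adj :: "nat \<Rightarrow> nat \<Rightarrow> (nat \<Rightarrow> nat \<Rightarrow> bool) \<Rightarrow> gvert \<Rightarrow> gvert \<Rightarrow> bool" where
  "Gp_adj n d E x y \<longleftrightarrow> x \<in> Gp_verts n d \<and> y \<in> Gp_verts n d \<and> Gp_adj0 E x y"

definition induces_connected :: "('a \<Rightarrow> 'a \<Rightarrow> bool) \<Rightarrow> 'a set \<Rightarrow> bool" where
  "induces_connected A S \<longleftrightarrow> S \<noteq> {} \<and>
     (\<forall>x\<in>S. \<forall>y\<in>S. (\<lambda>u v. u \<in> S \<and> v \<in> S \<and> A u v)\<^sup>*\<^sup>* x y)"

definition is_middle :: "gvert \<Rightarrow> bool" where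
  "is_middle v \<longleftrightarrow> (\<exists>i. v = Mid i)"

end

theory Submission
  imports Defs
begin

text \<open>There are exactly h non-middle vertices, so it suffices to show that every S i
contains one: then h disjoint nonempty subsets of an h-element set must be singletons
covering it. If S i contained only middle vertices it would be a single vertex m_a,
the middle vertices being independent. Each of the other h - 1 sets contains its own
neighbour of m_a, and these are non-middle. But v_a fails to dominate some v_c, so
none of the n + 1 vertices b_{c,k} is a neighbour of m_a, leaving at most h - (n + 1)
candidates.\<close>

lemma disjoint_nonempty_subsets_of_equal_card:
  assumes "finite N" "finite I" "card N = card I"
    and "\<And>i. i \<in> I \<Longrightarrow> T i \<subseteq> N" "\<And>i. i \<in> I \<Longrightarrow> T i \<noteq> {}"
    and "\<And>i j. i \<in> I \<Longrightarrow> j \<in> I \<Longrightarrow> i \<noteq> j \<Longrightarrow> T i \<inter> T j = {}"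
  shows "\<forall>i\<in>I. card (T i) = 1" and "(\<Union>i\<in>I. T i) = N"
proof -
  have finite_T: "finite (T i)" if "i \<in> I" for i
    using assms(1,4) that finite_subset by blast
  have card_UN: "card (\<Union>i\<in>I. T i) = (\<Sum>i\<in>I. card (T i))"
    using assms(2,6) finite_T by (simp add: card_UN_disjoint)
  have UN_subset: "(\<Union>i\<in>I. T i) \<subseteq> N"
    using assms(4) by blast
  have ge_1: "1 \<le> card (T i)" if "i \<in> I" for i
    using assms(5) finite_T that by (simp add: Suc_le_eq card_gt_0_iff)
  have "(\<Sum>i\<in>I. card (T i)) \<le> (\<Sum>i\<in>I. 1)"
    using card_mono[OF assms(1) UN_subset] card_UN assms(3) by simp
  moreover have "(\<Sum>i\<in>I. 1) \<le> (\<Sum>i\<in>I. card (T i))"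
    using ge_1 by (rule sum_mono)
  ultimately have sum_eq: "(\<Sum>i\<in>I. 1) = (\<Sum>i\<in>I. card (T i))"
    by (rule antisym[rotated])
  show card_1: "\<forall>i\<in>I. card (T i) = 1"
    using sum_mono_inv[OF sum_eq ge_1 _ assms(2)] by simp
  show "(\<Union>i\<in>I. T i) = N"
    using card_subset_eq[OF assms(1) UN_subset] card_UN card_1 assms(3) by simp
qed

lemma card_le_card_neighbours_of_touching:
  assumes "finite {y. A x y}"
    and "\<And>j. j \<in> J \<Longrightarrow> \<exists>y\<in>S j. A x y"
    and "\<And>i j. i \<in> J \<Longrightarrow> j \<in> J \<Longrightarrow> i \<noteq> j \<Longrightarrow> S i \<inter> S j = {}"
  shows "card J \<le> card {y. A x y}"
proof -
  obtain f where f: "\<And>j. j \<in> J \<Longrightarrow> f j \<in> S j \<and> A x (f j)"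
    using assms(2) by (metis (no_types))
  have "inj_on f J"
  proof (rule inj_onI, rule ccontr)
    fix i j assume "i \<in> J" "j \<in> J" "f i = f j" "i \<noteq> j"
    then show False
      using f[of i] f[of j] assms(3)[of i j] by auto
  qed
  moreover have "f ` J \<subseteq> {y. A x y}"
    using f by blast
  ultimately show ?thesis
    using card_inj_on_le assms(1) by blast
qed

lemma induces_connected_independent_singleton:
  assumes "induces_connected A S" and "\<And>x y. x \<in> S \<Longrightarrow> y \<in> S \<Longrightarrow> \<not> A x y"
  shows "\<exists>x. S = {x}"
proof -
  obtain x where x: "x \<in> S"
    using assms(1) unfolding induces_connected_def by blast
  have "y = x" if y: "y \<in> S" for y
  proof -
    have "(\<lambda>u v. u \<in> S \<and> v \<in> S \<and> A u v)\<^sup>*\<^sup>* x y"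
      using assms(1) x y unfolding induces_connected_def by blast
    then show ?thesis
      by (cases rule: converse_rtranclpE) (use assms(2) in auto)
  qed
  then show ?thesis
    using x by blast
qed

lemma Bot_grid_eq:
  "{Bot j k | j k. j < n \<and> k < n + 1} = (\<lambda>(j, k). Bot j k) ` ({..<n} \<times> {..<n + 1})"
  by auto

lemma finite_Gp_verts: "finite (Gp_verts n d)"
  unfolding Gp_verts_def Bot_grid_eq by simp

lemma card_non_middle_Gp_verts:
  "card {v \<in> Gp_verts n d. \<not> is_middle v} = n * (n + 1) + d"
proof -
  have "{v \<in> Gp_verts n d. \<not> is_middle v} = Top ` {..<d} \<union> (\<lambda>(j, k). Bot j k) ` ({..<n} \<times> {..<n + 1})"
    unfolding Gp_verts_def is_middle_def Bot_grid_eq by auto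
  also have "card \<dots> = d + n * (n + 1)"
    by (subst card_Un_disjoint) (auto simp: card_image inj_on_def)
  finally show ?thesis
    by simp
qed

lemma Gp_adj_Mid_Mid: "\<not> Gp_adj n d E (Mid a) (Mid b)"
  unfolding Gp_adj_def by simp

lemma card_neighbours_Mid_le:
  assumes "c < n" and "\<not> dominates E a c"
  shows "card {y. Gp_adj n d E (Mid a) y} \<le> n * (n + 1) + d - (n + 1)"
proof -
  let ?N = "{v \<in> Gp_verts n d. \<not> is_middle v}"
  have Bot_c: "Bot c ` {..<n + 1} \<subseteq> ?N" and card_Bot_c: "card (Bot c ` {..<n + 1}) = n + 1"
    using assms(1) by (auto simp: Gp_verts_def is_middle_def card_image inj_on_def)
  have "{y. Gp_adj n d E (Mid a) y} \<subseteq> ?N - Bot c ` {..<n + 1}"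
  proof
    fix y assume "y \<in> {y. Gp_adj n d E (Mid a) y}"
    then show "y \<in> ?N - Bot c ` {..<n + 1}"
      using assms(2) unfolding Gp_adj_def is_middle_def by (cases y) auto
  qed
  then have "card {y. Gp_adj n d E (Mid a) y} \<le> card (?N - Bot c ` {..<n + 1})"
    using finite_Gp_verts by (intro card_mono) auto
  also have "\<dots> = n * (n + 1) + d - (n + 1)"
    using Bot_c card_Bot_c finite_Gp_verts
    by (simp add: card_Diff_subset finite_subset card_non_middle_Gp_verts)
  finally show ?thesis .
qed

lemma branch_set_has_non_middle:
  assumes non_dominating: "\<forall>i<n. \<exists>j<n. j \<noteq> i \<and> \<not> E i j" and "n \<ge> 1"
    and h: "h = n * (n + 1) + d" and "i < h"
    and "\<forall>i<h. S i \<subseteq> Gp_verts n d"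
    and "\<forall>i<h. \<forall>j<h. i \<noteq> j \<longrightarrow> S i \<inter> S j = {}"
    and "\<forall>i<h. induces_connected (Gp_adj n d E) (S i)"
    and "\<forall>i<h. \<forall>j<h. i \<noteq> j \<longrightarrow> (\<exists>x\<in>S i. \<exists>y\<in>S j. Gp_adj n d E x y)"
  shows "\<exists>v\<in>S i. \<not> is_middle v"
proof (rule ccontr)
  assume "\<not> ?thesis"
  then have all_middle: "\<forall>v\<in>S i. is_middle v" by blast
  moreover have "\<not> Gp_adj n d E x y" if "x \<in> S i" "y \<in> S i" for x y
    using all_middle that Gp_adj_Mid_Mid unfolding is_middle_def by metis
  ultimately have "\<exists>x. S i = {x}"
    using assms(4,7) induces_connected_independent_singleton by blast
  then obtain a where S_i: "S i = {Mid a}"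
    using all_middle unfolding is_middle_def by auto
  then have "a < n"
    using assms(4,5) unfolding Gp_verts_def by auto
  then obtain c where "c < n" "\<not> dominates E a c"
    using non_dominating unfolding dominates_def by blast
  then have "card {y. Gp_adj n d E (Mid a) y} \<le> h - (n + 1)"
    using h card_neighbours_Mid_le by blast
  moreover have "card ({..<h} - {i}) \<le> card {y. Gp_adj n d E (Mid a) y}"
  proof (rule card_le_card_neighbours_of_touching)
    show "finite {y. Gp_adj n d E (Mid a) y}"
      by (rule finite_subset[OF _ finite_Gp_verts]) (auto simp: Gp_adj_def)
    show "\<exists>y\<in>S j. Gp_adj n d E (Mid a) y" if "j \<in> {..<h} - {i}" for j
      using assms(8)[rule_format, of i j] that \<open>i < h\<close> S_i by auto
    show "S j \<inter> S k = {}" if "j \<in> {..<h} - {i}" "k \<in> {..<h} - {i}" "j \<noteq> k" for j k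
      using assms(6) that by auto
  qed
  moreover have "card ({..<h} - {i}) = h - 1"
    using \<open>i < h\<close> by simp
  moreover have "n + 1 \<le> n * (n + 1)"
    using \<open>n \<ge> 1\<close> by simp
  ultimately show False
    using h \<open>n \<ge> 1\<close> by linarith
qed

theorem lemma3:
  fixes n d :: nat and E :: "nat \<Rightarrow> nat \<Rightarrow> bool" and S :: "nat \<Rightarrow> gvert set"
  assumes "simple_graph n E"
    and "n \<ge> 1"
    and "\<forall>i<n. \<exists>j<n. j \<noteq> i \<and> \<not> E i j"
    and "d \<ge> 1"
    and "h = n * (n + 1) + d"
    and "\<forall>i<h. S i \<subseteq> Gp_verts n d"
    and "\<forall>i<h. \<forall>j<h. i \<noteq> j \<longrightarrow> S i \<inter> S j = {}"
    and "\<forall>i<h. induces_connected (Gp_adj n d E) (S i)"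
    and "\<forall>i<h. \<forall>j<h. i \<noteq> j \<longrightarrow> (\<exists>x\<in>S i. \<exists>y\<in>S j. Gp_adj n d E x y)"
  shows "(\<forall>i<h. \<exists>!v. v \<in> S i \<and> \<not> is_middle v) \<and>
         (\<forall>v\<in>Gp_verts n d. \<not> is_middle v \<longrightarrow> (\<exists>!i. i < h \<and> v \<in> S i))"
proof -
  let ?N = "{v \<in> Gp_verts n d. \<not> is_middle v}"
  define T where "T i = {v \<in> S i. \<not> is_middle v}" for i
  have finite_N: "finite ?N"
    using finite_Gp_verts by simp
  have card_N: "card ?N = card {..<h}"
    using assms(5) card_non_middle_Gp_verts by simp
  have T_subset: "T i \<subseteq> ?N" if "i \<in> {..<h}" for i
    using assms(6) that by (auto simp: T_def)
  have T_nonempty: "T i \<noteq> {}" if "i \<in> {..<h}" for i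
    using branch_set_has_non_middle[OF assms(3,2,5) _ assms(6-9)] that by (auto simp: T_def)
  have T_disjoint: "T i \<inter> T j = {}" if "i \<in> {..<h}" "j \<in> {..<h}" "i \<noteq> j" for i j
    using assms(7) that by (auto simp: T_def)
  note pigeonhole = disjoint_nonempty_subsets_of_equal_card[OF finite_N finite_lessThan card_N
      T_subset T_nonempty T_disjoint]
  have card_T: "\<forall>i\<in>{..<h}. card (T i) = 1"
    using pigeonhole(1) .
  have cover: "(\<Union>i\<in>{..<h}. T i) = ?N"
    using pigeonhole(2) .
  have "\<exists>!v. v \<in> S i \<and> \<not> is_middle v" if "i < h" for i
  proof -
    have "card (T i) = 1"
      using card_T that by simp
    then obtain v where "T i = {v}"
      by (rule card_1_singletonE)
    then show ?thesis
      by (intro ex1I[of _ v]) (auto simp: T_def set_eq_iff)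
  qed
  moreover have "\<exists>!i. i < h \<and> v \<in> S i" if "v \<in> Gp_verts n d" "\<not> is_middle v" for v
    using cover assms(7) that unfolding T_def by blast
  ultimately show ?thesis
    by blast
qed

end
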